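(* Let $G$ and $K$ be finite sets, let $\beta:G\rightarrow K$ be a surjective function, let $U\subseteq\Lambda^G$ be such that $\Xi_\beta(U)=\Lambda^K$, and let $f^*:K\rightarrow\mathbb R^+$. Then for every $p\in U$ and every $\epsilon>0$ there exists $\delta'>0$ such that for every $\delta\ge 0$ with $\delta<\delta'$ and every function $f:G\rightarrow\mathbb R^+$ whose thematic mean divergence with respect to $f^*$ on $U$ under $\beta$ is bounded by $\delta$, we have \[d(\Xi_\beta(\mathcal S_f p),\,\mathcal S_{f^*}(\Xi_\beta p))<\epsilon.\]
   Context: $\mathbb R^+$ denotes the positive reals. For a set $X$, $\Lambda^X$ is the set of functions $p:X\rightarrow[0,1]$ with $\sum_{x\in X}p(x)=1$. For $\beta:G\rightarrow K$ and $k\in K$, $\langle k\rangle_\beta=\{x\in G\mid \beta(x)=k\}$, and $\Xi_\beta:\Lambda^G\rightarrow\Lambda^K$ is $(\Xi_\beta p)(k)=\sum_{x\in\langle k\rangle_\beta}p(x)$; $\Xi_\beta(U)=\{\Xi_\beta p\mid p\in U\}$. For a finite set $X$ and $f:X\rightarrow\mathbb R^+$, $\mathcal E_f(p)=\sum_{x\in X}f(x)p(x)$ (defined also for the zero function $p$), and the selection operator $\mathcal S_f:\Lambda^X\rightarrow\Lambda^X$ is $(\mathcal S_fp)(x)=f(x)p(x)/\mathcal E_f(p)$. The theme conditional operator gives, for $p\in\Lambda^G$ and $k\in K$, the function $\mathcal C_\beta(p,k):G\rightarrow[0,1]$ with $(\mathcal C_\beta(p,k))(x)=p(x)/(\Xi_\beta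 p)(k)$ if $\beta(x)=k$ and $(\Xi_\beta p)(k)>0$, and $(\mathcal C_\beta(p,k))(x)=0$ otherwise. For $\delta\ge0$, the thematic mean divergence of $f:G\rightarrow\mathbb R^+$ with respect to $f^*:K\rightarrow\mathbb R^+$ on $U$ under $\beta$ is bounded by $\delta$ if for all $p\in U$ and all $k\in K$, $|\mathcal E_f(\mathcal C_\beta(p,k))-f^*(k)|\le\delta$. For real-valued functions $g,h$ on a finite set $X$, $d(g,h)=\sum_{x\in X}|g(x)-h(x)|$. *)

theory Defs
  imports "HOL-Analysis.Analysis"
begin

text \<open>Finite sets G and K are modelled as finite types 'g and 'k.\<close>

definition prob_simplex :: "('a::finite \<Rightarrow> real) set" where
  "prob_simplex = {p. (\<forall>x. 0 \<le> p x \<and> p x \<le> 1) \<and> (\<Sum>x\<in>UNIV. p x) = 1}"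

definition theme_class :: "('g \<Rightarrow> 'k) \<Rightarrow> 'k \<Rightarrow> 'g set" where
  "theme_class \<beta> k = {x. \<beta> x = k}"

definition Xi :: "('g::finite \<Rightarrow> 'k) \<Rightarrow> ('g \<Rightarrow> real) \<Rightarrow> 'k \<Rightarrow> real" where
  "Xi \<beta> p k = (\<Sum>x\<in>theme_class \<beta> k. p x)"

definition expect :: "('a::finite \<Rightarrow> real) \<Rightarrow> ('a \<Rightarrow> real) \<Rightarrow> real" where
  "expect f p = (\<Sum>x\<in>UNIV. f x * p x)"

definition select :: "('a::finite \<Rightarrow> real) \<Rightarrow> ('a \<Rightarrow> real) \<Rightarrow> 'a \<Rightarrow> real" where
  "select f p x = f x * p x / expect f p"

definition cond :: "('g::finite \<Rightarrow> 'k) \<Rightarrow> ('g \<Rightarrow> real) \<Rightarrow> 'k \<Rightarrow> 'g \<Rightarrow> real" where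
  "cond \<beta> p k x = (if \<beta> x = k \<and> Xi \<beta> p k > 0 then p x / Xi \<beta> p k else 0)"

definition mean_div_bounded ::
  "('g::finite \<Rightarrow> real) \<Rightarrow> ('k::finite \<Rightarrow> real) \<Rightarrow> ('g \<Rightarrow> real) set \<Rightarrow> ('g \<Rightarrow> 'k) \<Rightarrow> real \<Rightarrow> bool" where
  "mean_div_bounded f fs U \<beta> \<delta> \<longleftrightarrow>
     (\<forall>p\<in>U. \<forall>k. \<bar>expect f (cond \<beta> p k) - fs k\<bar> \<le> \<delta>)"

definition dist1 :: "('a::finite \<Rightarrow> real) \<Rightarrow> ('a \<Rightarrow> real) \<Rightarrow> real" where
  "dist1 g h = (\<Sum>x\<in>UNIV. \<bar>g x - h x\<bar>)"

end

theory Submission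
  imports Defs
begin

text \<open>Write \<open>A = \<Xi>\<^sub>\<beta>(f p)\<close> and \<open>B k = f\<^sup>*(k) (\<Xi>\<^sub>\<beta> p)(k)\<close>. Grouping the sum
  \<open>\<E>\<^sub>f(p)\<close> by themes shows that \<open>\<Xi>\<^sub>\<beta>(\<S>\<^sub>f p)\<close> is \<open>A\<close> normalised to total mass 1,
  while \<open>\<S>\<^bsub>f\<^sup>*\<^esub>(\<Xi>\<^sub>\<beta> p)\<close> is \<open>B\<close> normalised. Conditioning on the theme gives
  \<open>A k = \<E>\<^sub>f(\<C>\<^sub>\<beta>(p,k)) (\<Xi>\<^sub>\<beta> p)(k)\<close>, so a mean divergence bound \<open>\<delta>\<close> yields
  \<open>d(A,B) \<le> \<delta>\<close>. Normalisation is Lipschitz near \<open>B\<close>: if \<open>2 d(A,B) < \<Sum> B\<close>, the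
  normalised functions are at distance at most \<open>4 d(A,B) / \<Sum> B\<close>, and
  \<open>\<Sum> B = \<E>\<^bsub>f\<^sup>*\<^esub>(\<Xi>\<^sub>\<beta> p) > 0\<close> depends on \<open>p\<close> only.\<close>

lemma expect_pos:
  assumes f_pos: "\<And>x. 0 < f x" and q: "q \<in> prob_simplex"
  shows "0 < expect f q"
proof -
  have q_nonneg: "\<And>x. 0 \<le> q x" and q_sum: "(\<Sum>x\<in>UNIV. q x) = 1"
    using q by (auto simp: prob_simplex_def)
  have "\<exists>x. 0 < q x"
  proof (rule ccontr)
    assume "\<nexists>x. 0 < q x"
    then have "q = (\<lambda>_. 0)"
      using q_nonneg by (auto simp: fun_eq_iff not_less intro: antisym)
    then show False
      using q_sum by simp
  qed
  then obtain x where "0 < q x" ..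
  then show ?thesis
    unfolding expect_def using f_pos q_nonneg
    by (intro sum_pos2[of UNIV x]) (auto intro: mult_nonneg_nonneg less_imp_le)
qed

lemma dist1_normalized_le:
  fixes A B :: "'a::finite \<Rightarrow> real"
  assumes B_nonneg: "\<And>k. 0 \<le> B k" and close: "2 * dist1 A B < sum B UNIV"
  shows "dist1 (\<lambda>k. A k / sum A UNIV) (\<lambda>k. B k / sum B UNIV) \<le> 4 * dist1 A B / sum B UNIV"
proof -
  define \<delta> where "\<delta> = dist1 A B"
  define a b where "a = sum A UNIV" and "b = sum B UNIV"
  have "\<bar>a - b\<bar> \<le> \<delta>"
    unfolding a_def b_def \<delta>_def dist1_def sum_subtractf[symmetric] by (rule sum_abs)
  moreover have "0 \<le> \<delta>"
    unfolding \<delta>_def dist1_def by (simp add: sum_nonneg)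
  ultimately have "b \<le> 2 * a" and "0 < a" and "0 < b"
    using close by (simp_all add: \<delta>_def b_def)
  have "\<bar>A k / a - B k / b\<bar> \<le> \<bar>A k - B k\<bar> / a + B k * \<bar>b - a\<bar> / (a * b)" for k
  proof -
    have "A k / a - B k / b = (A k - B k) / a + B k * (b - a) / (a * b)"
      using \<open>0 < a\<close> \<open>0 < b\<close> by (simp add: field_simps)
    then show ?thesis
      using \<open>0 < a\<close> \<open>0 < b\<close> B_nonneg[of k]
      by (metis abs_divide abs_mult abs_of_nonneg abs_of_pos abs_triangle_ineq mult_pos_pos)
  qed
  then have "dist1 (\<lambda>k. A k / a) (\<lambda>k. B k / b)
      \<le> (\<Sum>k\<in>UNIV. \<bar>A k - B k\<bar> / a + B k * \<bar>b - a\<bar> / (a * b))"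
    unfolding dist1_def by (rule sum_mono)
  also have "\<dots> = \<delta> / a + \<bar>b - a\<bar> / a"
    using \<open>0 < b\<close> unfolding \<delta>_def dist1_def b_def
    by (simp add: sum.distrib sum_divide_distrib[symmetric] sum_distrib_right[symmetric])
  also have "\<dots> \<le> 2 * \<delta> / a"
    using \<open>\<bar>a - b\<bar> \<le> \<delta>\<close> \<open>0 < a\<close> by (simp add: abs_minus_commute divide_right_mono add_divide_distrib[symmetric])
  also have "\<dots> \<le> 4 * \<delta> / b"
    using \<open>b \<le> 2 * a\<close> \<open>0 < a\<close> \<open>0 < b\<close> \<open>0 \<le> \<delta>\<close> by (simp add: field_simps mult_left_mono)
  finally show ?thesis
    by (simp add: a_def b_def \<delta>_def)
qed

lemma sum_Xi:
  fixes \<beta> :: "'g::finite \<Rightarrow> 'k::finite"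
  shows "(\<Sum>k\<in>UNIV. Xi \<beta> h k) = (\<Sum>x\<in>UNIV. h x)"
  using sum.group[of "UNIV::'g set" "UNIV::'k set" \<beta> h] by (simp add: Xi_def theme_class_def)

lemma Xi_nonneg: "(\<And>x. 0 \<le> p x) \<Longrightarrow> 0 \<le> Xi \<beta> p k"
  unfolding Xi_def by (simp add: sum_nonneg)

lemma Xi_mult_eq_expect_cond:
  assumes p_nonneg: "\<And>x. 0 \<le> p x"
  shows "Xi \<beta> (\<lambda>x. f x * p x) k = expect f (cond \<beta> p k) * Xi \<beta> p k"
proof (cases "Xi \<beta> p k > 0")
  case True
  have "expect f (cond \<beta> p k) = (\<Sum>x\<in>UNIV. if \<beta> x = k then f x * p x / Xi \<beta> p k else 0)"
    unfolding expect_def cond_def using True by (intro sum.cong) auto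
  also have "\<dots> = Xi \<beta> (\<lambda>x. f x * p x) k / Xi \<beta> p k"
    by (simp add: sum.If_cases Xi_def theme_class_def sum_divide_distrib)
  finally show ?thesis using True by simp
next
  case False
  moreover have "0 \<le> Xi \<beta> p k"
    using p_nonneg by (rule Xi_nonneg)
  ultimately have "Xi \<beta> p k = 0"
    by linarith
  then have "\<forall>x\<in>theme_class \<beta> k. p x = 0"
    using sum_nonneg_eq_0_iff[of "theme_class \<beta> k" p] p_nonneg by (simp add: Xi_def)
  then show ?thesis
    using \<open>Xi \<beta> p k = 0\<close> by (simp add: Xi_def)
qed

lemma dist1_Xi_mult_le:
  fixes \<beta> :: "'g::finite \<Rightarrow> 'k::finite"
  assumes p_nonneg: "\<And>x. 0 \<le> p x" and p_sum: "(\<Sum>x\<in>UNIV. p x) = 1"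
    and mean_div: "\<And>k. \<bar>expect f (cond \<beta> p k) - fs k\<bar> \<le> \<delta>"
  shows "dist1 (Xi \<beta> (\<lambda>x. f x * p x)) (\<lambda>k. fs k * Xi \<beta> p k) \<le> \<delta>"
proof -
  have "dist1 (Xi \<beta> (\<lambda>x. f x * p x)) (\<lambda>k. fs k * Xi \<beta> p k)
      = (\<Sum>k\<in>UNIV. \<bar>expect f (cond \<beta> p k) - fs k\<bar> * Xi \<beta> p k)"
    unfolding dist1_def Xi_mult_eq_expect_cond[OF p_nonneg]
    by (intro sum.cong)
      (simp_all add: left_diff_distrib[symmetric] abs_mult abs_of_nonneg Xi_nonneg p_nonneg)
  also have "\<dots> \<le> (\<Sum>k\<in>UNIV. \<delta> * Xi \<beta> p k)"
    by (intro sum_mono mult_right_mono mean_div Xi_nonneg p_nonneg)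
  also have "\<dots> = \<delta>"
    by (simp add: sum_distrib_left[symmetric] sum_Xi p_sum)
  finally show ?thesis .
qed

lemma Xi_select:
  fixes \<beta> :: "'g::finite \<Rightarrow> 'k::finite"
  shows "Xi \<beta> (select f p) = (\<lambda>k. Xi \<beta> (\<lambda>x. f x * p x) k / (\<Sum>j\<in>UNIV. Xi \<beta> (\<lambda>x. f x * p x) j))"
  unfolding sum_Xi by (simp add: fun_eq_iff Xi_def select_def expect_def sum_divide_distrib)

lemma dist1_Xi_select_le:
  fixes \<beta> :: "'g::finite \<Rightarrow> 'k::finite"
  assumes p_nonneg: "\<And>x. 0 \<le> p x" and p_sum: "(\<Sum>x\<in>UNIV. p x) = 1"
    and fs_nonneg: "\<And>k. 0 \<le> fs k"
    and mean_div: "\<And>k. \<bar>expect f (cond \<beta> p k) - fs k\<bar> \<le> \<delta>"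
    and small: "2 * \<delta> < expect fs (Xi \<beta> p)"
  shows "dist1 (Xi \<beta> (select f p)) (select fs (Xi \<beta> p)) \<le> 4 * \<delta> / expect fs (Xi \<beta> p)"
proof -
  define A where "A = Xi \<beta> (\<lambda>x. f x * p x)"
  define B where "B k = fs k * Xi \<beta> p k" for k
  have B_nonneg: "0 \<le> B k" for k
    unfolding B_def by (intro mult_nonneg_nonneg fs_nonneg Xi_nonneg p_nonneg)
  have sum_B: "sum B UNIV = expect fs (Xi \<beta> p)"
    by (simp add: B_def expect_def)
  have dist_AB: "dist1 A B \<le> \<delta>"
    unfolding A_def B_def[abs_def] by (rule dist1_Xi_mult_le[OF p_nonneg p_sum mean_div])
  have "Xi \<beta> (select f p) = (\<lambda>k. A k / sum A UNIV)"
    unfolding A_def by (rule Xi_select)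
  moreover have "select fs (Xi \<beta> p) = (\<lambda>k. B k / sum B UNIV)"
    unfolding sum_B by (simp add: fun_eq_iff select_def B_def)
  moreover have "2 * dist1 A B < sum B UNIV"
    using dist_AB small sum_B by linarith
  ultimately have "dist1 (Xi \<beta> (select f p)) (select fs (Xi \<beta> p)) \<le> 4 * dist1 A B / sum B UNIV"
    using dist1_normalized_le[OF B_nonneg] by simp
  also have "\<dots> \<le> 4 * \<delta> / sum B UNIV"
    using dist_AB B_nonneg by (simp add: divide_right_mono sum_nonneg)
  finally show ?thesis
    unfolding sum_B .
qed

theorem theorem2:
  fixes \<beta> :: "'g::finite \<Rightarrow> 'k::finite"
    and U :: "('g \<Rightarrow> real) set"
    and fs :: "'k \<Rightarrow> real"
  assumes surj: "surj \<beta>"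
    and U_sub: "U \<subseteq> prob_simplex"
    and U_img: "Xi \<beta> ` U = prob_simplex"
    and fs_pos: "\<forall>k. fs k > 0"
  shows "\<forall>p\<in>U. \<forall>\<epsilon>>0. \<exists>\<delta>'>0. \<forall>\<delta> f. 0 \<le> \<delta> \<and> \<delta> < \<delta>' \<and> (\<forall>x. f x > 0)
            \<and> mean_div_bounded f fs U \<beta> \<delta>
            \<longrightarrow> dist1 (Xi \<beta> (select f p)) (select fs (Xi \<beta> p)) < \<epsilon>"
proof (intro ballI allI impI)
  fix p and \<epsilon> :: real
  assume p: "p \<in> U" and "0 < \<epsilon>"
  have p_nonneg: "\<And>x. 0 \<le> p x" and p_sum: "(\<Sum>x\<in>UNIV. p x) = 1"
    using p U_sub by (auto simp: prob_simplex_def)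
  define E where "E = expect fs (Xi \<beta> p)"
  have "0 < E"
    unfolding E_def using fs_pos p U_img by (intro expect_pos) auto
  show "\<exists>\<delta>'>0. \<forall>\<delta> f. 0 \<le> \<delta> \<and> \<delta> < \<delta>' \<and> (\<forall>x. f x > 0) \<and> mean_div_bounded f fs U \<beta> \<delta>
          \<longrightarrow> dist1 (Xi \<beta> (select f p)) (select fs (Xi \<beta> p)) < \<epsilon>"
  proof (intro exI[of _ "min (E / 2) (\<epsilon> * E / 4)"] conjI allI impI)
    fix \<delta> f
    assume "0 \<le> \<delta> \<and> \<delta> < min (E / 2) (\<epsilon> * E / 4) \<and> (\<forall>x. f x > 0)
      \<and> mean_div_bounded f fs U \<beta> \<delta>"
    then have \<delta>: "2 * \<delta> < E" "4 * \<delta> / E < \<epsilon>"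
      and mean_div: "\<And>k. \<bar>expect f (cond \<beta> p k) - fs k\<bar> \<le> \<delta>"
      using p \<open>0 < E\<close> by (auto simp: mean_div_bounded_def field_simps)
    have "dist1 (Xi \<beta> (select f p)) (select fs (Xi \<beta> p)) \<le> 4 * \<delta> / E"
      unfolding E_def using fs_pos \<delta>(1)
      by (intro dist1_Xi_select_le[OF p_nonneg p_sum _ mean_div]) (auto simp: E_def less_imp_le)
    with \<delta>(2) show "dist1 (Xi \<beta> (select f p)) (select fs (Xi \<beta> p)) < \<epsilon>"
      by linarith
  qed (use \<open>0 < \<epsilon>\<close> \<open>0 < E\<close> in simp)
qed

end
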